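(* Let $\mathcal{A}$ be a finite alphabet with $\#\mathcal{A}\ge2$. For every irreducible pair $\mathbf{p}$ on $\mathcal{A}$, $d_{\mathrm{cycle}}(\mathbf{p},\mathrm{Std}(\mathcal{A}))\le\#\mathcal{A}-2$.
   Context: Let $n=\#\mathcal{A}$. A pair is $\mathbf{p}=(p_0,p_1)$ with $p_0,p_1:\mathcal{A}\to\{1,\dots,n\}$ bijections. Irreducible: $p_0^{-1}\{1,\dots,k\}\ne p_1^{-1}\{1,\dots,k\}$ for $1\le k<n$. Rauzy move of type $\varepsilon$: $\varepsilon\mathbf{p}=(p'_0,p'_1)$, $p'_\varepsilon=p_\varepsilon$, and for $z=p_\varepsilon^{-1}(n)$, $p'_{1-\varepsilon}(b)=p_{1-\varepsilon}(b)$ if $p_{1-\varepsilon}(b)\le p_{1-\varepsilon}(z)$, $=p_{1-\varepsilon}(b)+1$ if $p_{1-\varepsilon}(z)<p_{1-\varepsilon}(b)<n$, $=p_{1-\varepsilon}(z)+1$ if $p_{1-\varepsilon}(b)=n$. A Rauzy path is a sequence of Rauzy moves, written $\varepsilon_1^{k_1}\cdots\varepsilon_m^{k_m}$ with $k_i>0$ and $\varepsilon_{i+1}=1-\varepsilon_i$ (each $\varepsilon_i^{k_i}$ meaning $k_i$ consecutive moves of type $\varepsilon_i$); its cycle length is $m$. For pairs $\mathbf{p},\mathbf{p}'$ in the same Rauzy class, $d_{\mathrm{cycle}}(\mathbf{p},\mathbf{p}')=0$ if $\mathbf{p}=\mathbf{p}'$ and otherwise the minimum cycle length of a Rauzy path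 from $\mathbf{p}$ to $\mathbf{p}'$. $\mathrm{Std}(\mathcal{A})$ is the set of standard pairs, i.e. those with $p_0^{-1}(1)=p_1^{-1}(n)$ and $p_1^{-1}(1)=p_0^{-1}(n)$, and $d_{\mathrm{cycle}}(\mathbf{p},\mathrm{Std}(\mathcal{A}))$ is the minimum of $d_{\mathrm{cycle}}(\mathbf{p},\mathbf{q})$ over standard $\mathbf{q}$ reachable from $\mathbf{p}$ by Rauzy moves. *)

theory Defs
  imports Main "HOL-Library.Cardinality"
begin

text \<open>The alphabet is the finite type 'a; n = CARD('a). A pair is (p0, p1) with
  p0, p1 :: 'a => nat bijections onto {1..n}. Move types are encoded as nats 0 and 1.\<close>

type_synonym 'a rpair = "('a \<Rightarrow> nat) \<times> ('a \<Rightarrow> nat)"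

definition is_pair :: "('a::finite) rpair \<Rightarrow> bool" where
  "is_pair p \<longleftrightarrow> bij_betw (fst p) UNIV {1..CARD('a) } \<and> bij_betw (snd p) UNIV {1..CARD('a) }"

definition irreducible_pair :: "('a::finite) rpair \<Rightarrow> bool" where
  "irreducible_pair p \<longleftrightarrow> is_pair p \<and>
     (\<forall>k. 1 \<le> k \<and> k < CARD('a) \<longrightarrow> fst p -` {1..k} \<noteq> snd p -` {1..k})"

definition rauzy_move :: "nat \<Rightarrow> ('a::finite) rpair \<Rightarrow> 'a rpair" where
  "rauzy_move e p = (let n = CARD('a);
       pe = (if e = 0 then fst p else snd p);
       po = (if e = 0 then snd p else fst p);
       z = (THE z. pe z = n);
       po' = (\<lambda>b. if po b \<le> po z then po b
                  else if po b < n then po b + 1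
                  else po z + 1)
     in if e = 0 then (fst p, po') else (po', snd p))"

fun apply_moves :: "nat list \<Rightarrow> ('a::finite) rpair \<Rightarrow> 'a rpair" where
  "apply_moves [] p = p"
| "apply_moves (e # es) p = apply_moves es (rauzy_move e p)"

fun cycle_length :: "nat list \<Rightarrow> nat" where
  "cycle_length [] = 0"
| "cycle_length [x] = 1"
| "cycle_length (x # y # xs) = (if x = y then 0 else 1) + cycle_length (y # xs)"

definition rauzy_reachable :: "('a::finite) rpair \<Rightarrow> 'a rpair \<Rightarrow> bool" where
  "rauzy_reachable p q \<longleftrightarrow> (\<exists>es. set es \<subseteq> {0,1} \<and> apply_moves es p = q)"

definition d_cycle :: "('a::finite) rpair \<Rightarrow> 'a rpair \<Rightarrow> nat" where
  "d_cycle p q = (if p = q then 0 else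
     (LEAST m. \<exists>es. set es \<subseteq> {0,1} \<and> apply_moves es p = q \<and> cycle_length es = m))"

definition standard_pair :: "('a::finite) rpair \<Rightarrow> bool" where
  "standard_pair p \<longleftrightarrow> is_pair p \<and>
     fst p -` {1} = snd p -` {CARD('a) } \<and> snd p -` {1} = fst p -` {CARD('a) }"

definition d_cycle_Std :: "('a::finite) rpair \<Rightarrow> nat" where
  "d_cycle_Std p = Min {d_cycle p q | q. standard_pair q \<and> rauzy_reachable p q}"

end

theory Submission
  imports Defs
begin

text \<open>Write a pair as (f, g) = (p0, p1), let z be the letter with g z = n and put v = f z.
  A block of type-1 moves keeps g and rotates the values of f above v cyclically. If v = 1,
  one such block moves the letter c with g c = 1 to the last place of f, and the pair is
  standard. If v > 1, irreducibility at level v - 1 yields a letter x with f x > v and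
  g x < v; one block brings x to the last place of f, and after exchanging the roles of
  f and g the same situation recurs with the smaller value g x. By induction a standard
  pair is reached after at most v blocks. For the theorem one applies this either to (f, g)
  or to (g, f), where w is the letter with f w = n: for n \<ge> 3 irreducibility at levels
  n - 1 and n - 2 forces f z \<le> n - 2 or g w \<le> n - 2, and for n = 2 an irreducible pair
  is already standard.\<close>

section \<open>Rotating the values above a threshold\<close>

definition rotate_above :: "nat \<Rightarrow> nat \<Rightarrow> nat \<Rightarrow> nat \<Rightarrow> nat" where
  "rotate_above n q k i = (if i \<le> q then i else Suc q + (i - Suc q + k) mod (n - q))"

lemma rotate_above_0: "i \<le> n \<Longrightarrow> rotate_above n q 0 i = i"
  by (simp add: rotate_above_def)

lemma rotate_above_1:
  "i \<le> n \<Longrightarrow> rotate_above n q 1 i = (if i \<le> q then i else if i < n then i + 1 else q + 1)"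
  by (auto simp: rotate_above_def Suc_diff_Suc)

lemma rotate_above_Suc: "rotate_above n q k (rotate_above n q 1 i) = rotate_above n q (Suc k) i"
proof (cases "i \<le> q")
  case False
  then have "i - Suc q + Suc k = i - q + k" by simp
  then show ?thesis using False by (simp add: rotate_above_def mod_add_left_eq)
qed (simp add: rotate_above_def)

lemma rotate_above_to_top: "q < i \<Longrightarrow> i \<le> n \<Longrightarrow> rotate_above n q (n - i) i = n"
  by (simp add: rotate_above_def)

lemma rotate_above_mem_prefix_iff:
  "j \<le> q \<Longrightarrow> rotate_above n q k i \<in> {1..j} \<longleftrightarrow> i \<in> {1..j}"
  by (auto simp: rotate_above_def)

lemma mod_add_right_cancel_less:
  fixes a b k m :: nat
  assumes "(a + k) mod m = (b + k) mod m" "a < m" "b < m"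
  shows "a = b"
proof -
  have "m dvd b - a" if "a \<le> b"
    using assms(1) that mod_eq_dvd_iff_nat[of "a + k" "b + k" m] by simp
  moreover have "m dvd a - b" if "b \<le> a"
    using assms(1) that mod_eq_dvd_iff_nat[of "b + k" "a + k" m] by simp
  ultimately show ?thesis
    using assms(2,3) nat_dvd_not_less[of "b - a" m] nat_dvd_not_less[of "a - b" m]
    by (cases a b rule: linorder_cases) auto
qed

lemma bij_betw_rotate_above: "bij_betw (rotate_above n q k) {1..n} {1..n}"
proof -
  have into: "rotate_above n q k i \<in> {1..n}" if "i \<in> {1..n}" for i
  proof (cases "i \<le> q")
    case False
    then have "(i - Suc q + k) mod (n - q) < n - q" using that by simp
    then show ?thesis using False by (simp add: rotate_above_def)
  qed (use that in \<open>simp add: rotate_above_def\<close>)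
  have "inj_on (rotate_above n q k) {1..n}"
  proof (rule inj_onI)
    fix i j assume i: "i \<in> {1..n}" and j: "j \<in> {1..n}"
      and eq: "rotate_above n q k i = rotate_above n q k j"
    show "i = j"
    proof (cases "i \<le> q"; cases "j \<le> q")
      assume "\<not> i \<le> q" "\<not> j \<le> q"
      then have "(i - Suc q + k) mod (n - q) = (j - Suc q + k) mod (n - q)"
        using eq by (simp add: rotate_above_def)
      then have "i - Suc q = j - Suc q"
        by (rule mod_add_right_cancel_less) (use i j \<open>\<not> i \<le> q\<close> \<open>\<not> j \<le> q\<close> in auto)
      then show "i = j" using \<open>\<not> i \<le> q\<close> \<open>\<not> j \<le> q\<close> by simp
    qed (use eq in \<open>auto simp: rotate_above_def\<close>)
  qed
  moreover have "rotate_above n q k ` {1..n} \<subseteq> {1..n}" using into by blast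
  ultimately show ?thesis by (simp add: bij_betw_def endo_inj_surj)
qed

section \<open>Rankings and pairs\<close>

abbreviation is_ranking :: "('a::finite \<Rightarrow> nat) \<Rightarrow> bool" where
  "is_ranking f \<equiv> bij_betw f UNIV {1..CARD('a)}"

lemma is_pair_iff: "is_pair (f, g) \<longleftrightarrow> is_ranking f \<and> is_ranking g"
  by (simp add: is_pair_def)

lemma ranking_range:
  fixes f :: "'a::finite \<Rightarrow> nat"
  shows "is_ranking f \<Longrightarrow> f b \<in> {1..CARD('a)}"
  using bij_betwE by blast

lemma ranking_attains:
  fixes f :: "'a::finite \<Rightarrow> nat"
  assumes "is_ranking f" "i \<in> {1..CARD('a)}"
  obtains b where "f b = i"
  using assms by (metis bij_betw_imp_surj_on imageE)

lemma ranking_eq_iff: "is_ranking f \<Longrightarrow> f a = f b \<longleftrightarrow> a = b"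
  by (auto simp: bij_betw_def dest: injD)

lemma ranking_vimage_singleton: "is_ranking f \<Longrightarrow> f c = y \<Longrightarrow> f -` {y} = {c}"
  by (auto dest: bij_betw_imp_inj_on injD)

lemma card_ranking_vimage_prefix:
  fixes f :: "'a::finite \<Rightarrow> nat"
  assumes "is_ranking f" "j \<le> CARD('a)"
  shows "card (f -` {1..j}) = j"
  using assms by (subst card_vimage_inj) (auto simp: bij_betw_def)

lemma ranking_vimage_prefix_compl:
  fixes f :: "'a::finite \<Rightarrow> nat"
  assumes "is_ranking f" "j \<le> CARD('a)"
  shows "f -` {1..j} = - f -` {Suc j..CARD('a)}"
  using ranking_range[OF assms(1)] by fastforce

lemma is_pair_rotate_above:
  fixes f g :: "'a::finite \<Rightarrow> nat"
  shows "is_pair (f, g) \<Longrightarrow> is_pair (rotate_above CARD('a) q k \<circ> f, g)"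
  unfolding is_pair_iff using bij_betw_trans bij_betw_rotate_above by blast

lemma standard_pairI:
  fixes f g :: "'a::finite \<Rightarrow> nat"
  assumes "is_pair (f, g)" "f a = 1" "g a = CARD('a)" "g c = 1" "f c = CARD('a)"
  shows "standard_pair (f, g)"
  using assms by (simp add: standard_pair_def is_pair_iff ranking_vimage_singleton)

lemma standard_pair_swap: "standard_pair (prod.swap p) = standard_pair p"
  by (cases p) (auto simp: standard_pair_def is_pair_def)

lemma finite_pairs: "finite {p :: ('a::finite) rpair. is_pair p}"
proof -
  let ?R = "{f :: 'a \<Rightarrow> nat. \<forall>b. f b \<in> {1..CARD('a)}}"
  have "finite ?R" using finite_set_of_finite_funs[of "UNIV :: 'a set" "{1..CARD('a)}" 0] by simp
  moreover have "{p. is_pair p} \<subseteq> ?R \<times> ?R" by (auto simp: is_pair_def dest: bij_betwE)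
  ultimately show ?thesis by (meson finite_SigmaI finite_subset)
qed

section \<open>Rauzy moves\<close>

lemma rauzy_move_1:
  fixes f g :: "'a::finite \<Rightarrow> nat"
  assumes "is_pair (f, g)" "g z = CARD('a)"
  shows "rauzy_move 1 (f, g) = (rotate_above CARD('a) (f z) 1 \<circ> f, g)"
proof -
  have f: "is_ranking f" and g: "is_ranking g" using assms(1) by (simp_all add: is_pair_iff)
  have the_top: "(THE z. g z = CARD('a)) = z"
  proof (rule the_equality)
    show "y = z" if "g y = CARD('a)" for y using that assms(2) ranking_eq_iff[OF g, of y z] by simp
  qed (rule assms(2))
  have "rotate_above CARD('a) (f z) 1 (f b) =
      (if f b \<le> f z then f b else if f b < CARD('a) then f b + 1 else f z + 1)" for b
    using ranking_range[OF f, of b] rotate_above_1[of "f b" "CARD('a)" "f z"] by simp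
  then show ?thesis
    unfolding rauzy_move_def Let_def fst_conv snd_conv
    by (simp only: if_False one_neq_zero the_top) (simp add: comp_def)
qed

lemma apply_moves_replicate_1:
  fixes f g :: "'a::finite \<Rightarrow> nat"
  assumes "is_pair (f, g)" "g z = CARD('a)"
  shows "apply_moves (replicate k 1) (f, g) = (rotate_above CARD('a) (f z) k \<circ> f, g)"
  using assms(1)
proof (induction k arbitrary: f)
  case 0
  then have "f b \<le> CARD('a)" for b using ranking_range[of f b] by (simp add: is_pair_iff)
  then show ?case by (simp add: rotate_above_0 fun_eq_iff)
next
  case (Suc k)
  let ?F = "rotate_above CARD('a) (f z) 1 \<circ> f"
  have "?F z = f z" by (simp add: rotate_above_def)
  moreover have "apply_moves (replicate k 1) (?F, g) = (rotate_above CARD('a) (?F z) k \<circ> ?F, g)"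
    using Suc.prems by (intro Suc.IH is_pair_rotate_above)
  ultimately show ?case
    using rauzy_move_1[OF Suc.prems assms(2)] by (simp add: fun_eq_iff rotate_above_Suc[unfolded One_nat_def])
qed

lemma apply_moves_append: "apply_moves (xs @ ys) p = apply_moves ys (apply_moves xs p)"
  by (induction xs arbitrary: p) auto

lemma rauzy_move_0_swap: "rauzy_move 0 p = prod.swap (rauzy_move 1 (prod.swap p))"
  by (cases p) (auto simp: rauzy_move_def Let_def)

lemma apply_moves_flip:
  "set es \<subseteq> {0, 1} \<Longrightarrow>
    apply_moves (map (\<lambda>e. 1 - e) es) p = prod.swap (apply_moves es (prod.swap p))"
  by (induction es arbitrary: p) (auto simp: rauzy_move_0_swap)

lemma cycle_length_flip:
  "set es \<subseteq> {0, 1} \<Longrightarrow> cycle_length (map (\<lambda>e. 1 - e) es) = cycle_length es"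
  by (induction es rule: cycle_length.induct) auto

lemma cycle_length_replicate_append: "cycle_length (replicate k e @ es) \<le> Suc (cycle_length es)"
proof (induction k)
  case (Suc k)
  then show ?case by (cases k; cases es) auto
qed simp

section \<open>Reaching a standard pair within a bounded cycle length\<close>

definition reaches_standard_within :: "('a::finite) rpair \<Rightarrow> nat \<Rightarrow> bool" where
  "reaches_standard_within p m \<longleftrightarrow>
     (\<exists>es. set es \<subseteq> {0, 1} \<and> standard_pair (apply_moves es p) \<and> cycle_length es \<le> m)"

lemma reaches_standard_within_0: "standard_pair p \<Longrightarrow> reaches_standard_within p 0"
  unfolding reaches_standard_within_def by (rule exI[of _ "[]"]) simp

lemma reaches_standard_within_mono:
  "reaches_standard_within p m \<Longrightarrow> m \<le> m' \<Longrightarrow> reaches_standard_within p m'"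
  unfolding reaches_standard_within_def by (meson order_trans)

lemma reaches_standard_within_swap:
  assumes "reaches_standard_within (prod.swap p) m"
  shows "reaches_standard_within p m"
proof -
  obtain es where es: "set es \<subseteq> {0, 1}" "standard_pair (apply_moves es (prod.swap p))" "cycle_length es \<le> m"
    using assms by (auto simp: reaches_standard_within_def)
  then show ?thesis
    unfolding reaches_standard_within_def
    using apply_moves_flip[OF es(1), of p] cycle_length_flip[OF es(1)]
    by (intro exI[of _ "map (\<lambda>e. 1 - e) es"]) (auto simp: standard_pair_swap)
qed

lemma reaches_standard_within_prepend:
  assumes "apply_moves (replicate k e) p = p'" "reaches_standard_within p' m" "e \<in> {0, 1}"
  shows "reaches_standard_within p (Suc m)"
proof -
  obtain es where es: "set es \<subseteq> {0, 1}" "standard_pair (apply_moves es p')" "cycle_length es \<le> m"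
    using assms(2) by (auto simp: reaches_standard_within_def)
  have "cycle_length (replicate k e @ es) \<le> Suc m"
    using cycle_length_replicate_append[of k e es] es(3) by simp
  then show ?thesis
    unfolding reaches_standard_within_def using assms(1,3) es(1,2)
    by (intro exI[of _ "replicate k e @ es"]) (auto simp: apply_moves_append)
qed

lemma d_cycle_le_cycle_length:
  "set es \<subseteq> {0, 1} \<Longrightarrow> d_cycle p (apply_moves es p) \<le> cycle_length es"
  unfolding d_cycle_def by (auto intro: Least_le)

lemma reaches_standard_within_d_cycle_Std:
  assumes "reaches_standard_within p m"
  shows "(\<exists>q. standard_pair q \<and> rauzy_reachable p q) \<and> d_cycle_Std p \<le> m"
proof -
  obtain es where es: "set es \<subseteq> {0, 1}" "standard_pair (apply_moves es p)" "cycle_length es \<le> m"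
    using assms by (auto simp: reaches_standard_within_def)
  define q where "q = apply_moves es p"
  let ?D = "{d_cycle p q | q. standard_pair q \<and> rauzy_reachable p q}"
  have reach: "standard_pair q \<and> rauzy_reachable p q"
    using es by (auto simp: rauzy_reachable_def q_def)
  have "?D \<subseteq> d_cycle p ` {p. is_pair p}" by (auto simp: standard_pair_def)
  then have "finite ?D" using finite_pairs finite_surj by blast
  moreover have "d_cycle p q \<in> ?D" using reach by blast
  ultimately have "d_cycle_Std p \<le> d_cycle p q" unfolding d_cycle_Std_def by (rule Min_le)
  also have "\<dots> \<le> cycle_length es" unfolding q_def by (rule d_cycle_le_cycle_length[OF es(1)])
  also have "\<dots> \<le> m" by (rule es(3))
  finally show ?thesis using reach by blast
qed

definition irreducible_below :: "('a \<Rightarrow> nat) \<Rightarrow> ('a \<Rightarrow> nat) \<Rightarrow> nat \<Rightarrow> bool" where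
  "irreducible_below f g v \<longleftrightarrow> (\<forall>j. 1 \<le> j \<and> j < v \<longrightarrow> f -` {1..j} \<noteq> g -` {1..j})"

lemma irreducible_pair_iff:
  fixes f g :: "'a::finite \<Rightarrow> nat"
  shows "irreducible_pair (f, g) \<longleftrightarrow> is_pair (f, g) \<and> irreducible_below f g CARD('a)"
  by (simp add: irreducible_pair_def irreducible_below_def)

lemma irreducible_below_commute: "irreducible_below f g v \<longleftrightarrow> irreducible_below g f v"
  unfolding irreducible_below_def by (simp add: eq_commute)

lemma irreducible_below_mono: "irreducible_below f g v \<Longrightarrow> u \<le> v \<Longrightarrow> irreducible_below f g u"
  unfolding irreducible_below_def using order_less_le_trans by blast

lemma vimage_rotate_above_prefix:
  "j \<le> q \<Longrightarrow> (rotate_above n q k \<circ> f) -` {1..j} = f -` {1..j}"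
  using rotate_above_mem_prefix_iff by (auto simp: vimage_def)

lemma irreducible_below_rotate_above:
  assumes "irreducible_below f g v" "v \<le> Suc q"
  shows "irreducible_below (rotate_above n q k \<circ> f) g v"
  unfolding irreducible_below_def
proof (intro allI impI)
  fix j assume j: "1 \<le> j \<and> j < v"
  then have "(rotate_above n q k \<circ> f) -` {1..j} = f -` {1..j}"
    using assms(2) by (intro vimage_rotate_above_prefix) simp
  then show "(rotate_above n q k \<circ> f) -` {1..j} \<noteq> g -` {1..j}"
    using assms(1) j by (simp add: irreducible_below_def)
qed

lemma exists_crossing_letter:
  fixes f g :: "'a::finite \<Rightarrow> nat"
  assumes pair: "is_pair (f, g)" and gz: "g z = CARD('a)" and "2 \<le> f z"
    and irr: "f -` {1..f z - 1} \<noteq> g -` {1..f z - 1}"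
  shows "\<exists>x. f z < f x \<and> g x < f z"
proof (rule ccontr)
  assume no_crossing: "\<nexists>x. f z < f x \<and> g x < f z"
  let ?j = "f z - 1"
  have f: "is_ranking f" and g: "is_ranking g" using pair by (simp_all add: is_pair_iff)
  have "g -` {1..?j} \<subseteq> f -` {1..?j}"
  proof
    fix b assume b: "b \<in> g -` {1..?j}"
    then have "g b < f z" using \<open>2 \<le> f z\<close> by auto
    then have "b \<noteq> z" using gz ranking_range[OF f, of z] by auto
    then have "f b \<noteq> f z" using ranking_eq_iff[OF f] by simp
    moreover have "f b \<le> f z" using no_crossing \<open>g b < f z\<close> by (meson not_le)
    ultimately show "b \<in> f -` {1..?j}" using ranking_range[OF f, of b] by auto
  qed
  moreover have "card (g -` {1..?j}) = card (f -` {1..?j})"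
  proof -
    have "?j \<le> CARD('a)" using ranking_range[OF f, of z] by auto
    then show ?thesis using card_ranking_vimage_prefix[OF f] card_ranking_vimage_prefix[OF g] by simp
  qed
  ultimately have "g -` {1..?j} = f -` {1..?j}" by (rule card_subset_eq[OF finite])
  then show False using irr by simp
qed

lemma reaches_standard_within_end_value_1:
  fixes f g :: "'a::finite \<Rightarrow> nat"
  assumes pair: "is_pair (f, g)" and gz: "g z = CARD('a)" and fz: "f z = 1"
  shows "reaches_standard_within (f, g) 1"
proof -
  let ?n = "CARD('a)"
  have f: "is_ranking f" and g: "is_ranking g" using pair by (simp_all add: is_pair_iff)
  have "1 \<in> {1..?n}" by simp
  then obtain c where gc: "g c = 1" using ranking_attains[OF g] by blast
  define F where "F = rotate_above ?n (f z) (?n - f c) \<circ> f"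
  have moves: "apply_moves (replicate (?n - f c) 1) (f, g) = (F, g)"
    unfolding F_def by (rule apply_moves_replicate_1[OF pair gz])
  have Fz: "F z = 1" using fz by (simp add: F_def rotate_above_def)
  have Fc: "F c = ?n"
  proof (cases "c = z")
    case False
    then have "f z < f c" using fz ranking_eq_iff[OF f, of c z] ranking_range[OF f, of c] by auto
    then show ?thesis using ranking_range[OF f, of c] by (simp add: F_def rotate_above_to_top)
  qed (use gc gz Fz in simp)
  have "is_pair (F, g)" unfolding F_def by (rule is_pair_rotate_above[OF pair])
  then have "standard_pair (F, g)" by (rule standard_pairI[OF _ Fz gz gc Fc])
  then have "reaches_standard_within (F, g) 0" by (rule reaches_standard_within_0)
  then show ?thesis by (simp add: reaches_standard_within_prepend[OF moves])
qed

lemma reaches_standard_within_end_value: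
  fixes f g :: "'a::finite \<Rightarrow> nat"
  assumes "is_pair (f, g)" "g z = CARD('a)" "f z = v" "irreducible_below f g v"
  shows "reaches_standard_within (f, g) v"
  using assms
proof (induction v arbitrary: f g z rule: less_induct)
  case (less v)
  let ?n = "CARD('a)"
  have f: "is_ranking f" using less.prems(1) by (simp add: is_pair_iff)
  consider "v = 1" | "2 \<le> v" using ranking_range[OF f, of z] less.prems(3) by fastforce
  then show ?case
  proof cases
    case 1
    then show ?thesis using reaches_standard_within_end_value_1[OF less.prems(1,2)] less.prems(3) by simp
  next
    case 2
    have "f -` {1..v - 1} \<noteq> g -` {1..v - 1}"
      using less.prems(4) 2 by (simp add: irreducible_below_def)
    then obtain x where fx: "v < f x" and gx: "g x < v"
      using exists_crossing_letter[OF less.prems(1,2)] less.prems(3) 2 by blast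
    define F where "F = rotate_above ?n v (?n - f x) \<circ> f"
    have moves: "apply_moves (replicate (?n - f x) 1) (f, g) = (F, g)"
      unfolding F_def less.prems(3)[symmetric] by (rule apply_moves_replicate_1[OF less.prems(1,2)])
    have Fx: "F x = ?n" using fx ranking_range[OF f, of x] by (simp add: F_def rotate_above_to_top)
    have pair: "is_pair (g, F)"
      using is_pair_rotate_above[OF less.prems(1)] by (simp add: F_def is_pair_iff)
    have "irreducible_below f g (g x)" using less.prems(4) gx by (simp add: irreducible_below_mono)
    then have "irreducible_below F g (g x)"
      unfolding F_def using gx by (intro irreducible_below_rotate_above) simp_all
    then have "irreducible_below g F (g x)" using irreducible_below_commute by blast
    then have "reaches_standard_within (g, F) (g x)" by (rule less.IH[OF gx pair Fx refl])
    then have "reaches_standard_within (F, g) (g x)" using reaches_standard_within_swap[of "(F, g)"] by simp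
    then have "reaches_standard_within (f, g) (Suc (g x))"
      by (simp add: reaches_standard_within_prepend[OF moves])
    then show ?thesis using gx by (simp add: reaches_standard_within_mono)
  qed
qed

lemma irreducible_pair_end_letters:
  fixes f g :: "'a::finite \<Rightarrow> nat"
  assumes irr: "irreducible_pair (f, g)" and "2 \<le> CARD('a)"
    and gz: "g z = CARD('a)" and fw: "f w = CARD('a)"
  shows "z \<noteq> w" and "3 \<le> CARD('a) \<Longrightarrow> f z \<le> CARD('a) - 2 \<or> g w \<le> CARD('a) - 2"
proof -
  let ?n = "CARD('a)"
  have f: "is_ranking f" and g: "is_ranking g" and below: "irreducible_below f g ?n"
    using irr by (simp_all add: irreducible_pair_iff is_pair_iff)
  have top: "f -` {?n} = {w}" "g -` {?n} = {z}"
    using f g fw gz by (simp_all add: ranking_vimage_singleton)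
  show "z \<noteq> w"
  proof
    assume "z = w"
    moreover have "{Suc (?n - 1)..?n} = {?n}" using \<open>2 \<le> ?n\<close> by auto
    ultimately have "f -` {1..?n - 1} = g -` {1..?n - 1}"
      using top ranking_vimage_prefix_compl[OF f, of "?n - 1"] ranking_vimage_prefix_compl[OF g, of "?n - 1"]
      by simp
    then show False using below \<open>2 \<le> ?n\<close> by (auto simp: irreducible_below_def)
  qed
  assume "3 \<le> ?n"
  show "f z \<le> ?n - 2 \<or> g w \<le> ?n - 2"
  proof (rule ccontr)
    assume "\<not> (f z \<le> ?n - 2 \<or> g w \<le> ?n - 2)"
    moreover have "f z \<noteq> ?n" "g w \<noteq> ?n"
      using ranking_eq_iff[OF f, of z w] ranking_eq_iff[OF g, of w z] fw gz \<open>z \<noteq> w\<close> by auto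
    ultimately have "f z = ?n - 1" "g w = ?n - 1"
      using ranking_range[OF f, of z] ranking_range[OF g, of w] by auto
    then have "f -` {?n - 1} = {z}" "g -` {?n - 1} = {w}"
      using f g by (simp_all add: ranking_vimage_singleton)
    moreover have "{Suc (?n - 2)..?n} = {?n - 1} \<union> {?n}" using \<open>3 \<le> ?n\<close> by auto
    ultimately have "f -` {1..?n - 2} = g -` {1..?n - 2}"
      using top ranking_vimage_prefix_compl[OF f, of "?n - 2"] ranking_vimage_prefix_compl[OF g, of "?n - 2"]
      by (simp only: vimage_Un) auto
    then show False using below \<open>3 \<le> ?n\<close> by (auto simp: irreducible_below_def)
  qed
qed

lemma reaches_standard_within_irreducible:
  fixes f g :: "'a::finite \<Rightarrow> nat"
  assumes irr: "irreducible_pair (f, g)" and n: "2 \<le> CARD('a)"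
  shows "reaches_standard_within (f, g) (CARD('a) - 2)"
  (is "reaches_standard_within _ (?n - 2)")
proof -
  have pair: "is_pair (f, g)" and below: "irreducible_below f g ?n"
    using irr by (simp_all add: irreducible_pair_iff)
  then have f: "is_ranking f" and g: "is_ranking g" by (simp_all add: is_pair_iff)
  have top: "?n \<in> {1..?n}" using n by simp
  obtain z where gz: "g z = ?n" using ranking_attains[OF g top] by blast
  obtain w where fw: "f w = ?n" using ranking_attains[OF f top] by blast
  note end_letters = irreducible_pair_end_letters[OF irr n gz fw]
  show ?thesis
  proof (cases "?n = 2")
    case True
    have "f z \<noteq> ?n" "g w \<noteq> ?n"
      using ranking_eq_iff[OF f, of z w] ranking_eq_iff[OF g, of w z] fw gz end_letters(1) by auto
    then have "f z = 1" "g w = 1"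
      using ranking_range[OF f, of z] ranking_range[OF g, of w] True by auto
    then have "standard_pair (f, g)" using standard_pairI[OF pair _ gz _ fw] by simp
    then show ?thesis using True by (simp add: reaches_standard_within_0)
  next
    case False
    then consider "f z \<le> ?n - 2" | "g w \<le> ?n - 2" using end_letters(2) n by linarith
    then show ?thesis
    proof cases
      case 1
      have "irreducible_below f g (f z)"
        using below ranking_range[OF f, of z] by (simp add: irreducible_below_mono)
      then have "reaches_standard_within (f, g) (f z)"
        by (rule reaches_standard_within_end_value[OF pair gz refl])
      then show ?thesis using 1 by (rule reaches_standard_within_mono)
    next
      case 2
      have "irreducible_below g f ?n" using below irreducible_below_commute by blast
      from irreducible_below_mono[OF this] have "irreducible_below g f (g w)"
        using ranking_range[OF g, of w] by simp
      moreover have "is_pair (g, f)" using f g by (simp add: is_pair_iff)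
      ultimately have "reaches_standard_within (g, f) (g w)"
        using reaches_standard_within_end_value[of g f w] fw by blast
      then have "reaches_standard_within (f, g) (g w)" using reaches_standard_within_swap[of "(f, g)"] by simp
      then show ?thesis using 2 by (rule reaches_standard_within_mono)
    qed
  qed
qed

theorem lemma2p26:
  fixes p :: "('a::finite) rpair"
  assumes "CARD('a) \<ge> 2"
    and "irreducible_pair p"
  shows "(\<exists>q. standard_pair q \<and> rauzy_reachable p q) \<and> d_cycle_Std p \<le> CARD('a) - 2"
proof -
  obtain f g where p: "p = (f, g)" by fastforce
  have "reaches_standard_within p (CARD('a) - 2)"
    using reaches_standard_within_irreducible assms by (simp add: p)
  then show ?thesis by (rule reaches_standard_within_d_cycle_Std)
qed

end
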